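(* Let $s\ge2$ and $1=a_1\le a_2\le\dots\le a_s$ with at least one of $a_2,\dots,a_s$ greater than $1$. Define $c_i=1-a_i^{-1}$ for $2\le i\le s$, $M_j=\tfrac12(c_2^j+\dots+c_s^j)$ for $j\ge1$, $$p_0=\prod_{i=2}^s a_i^{-1/2},\qquad p_j=\frac1j\sum_{i=0}^{j-1}M_{j-i}\,p_i\ \ (j\ge1),$$ and $W_i=\sum_{j=0}^i p_j$. Then all $p_j>0$ and, for every $i\ge1$, $$\frac{(i+1)p_{i+1}}{i\,p_i}\le\frac{W_i}{W_{i-1}}.$$ *)

theory Defs
  imports Complex_Main
begin

definition cc :: "(nat \<Rightarrow> real) \<Rightarrow> nat \<Rightarrow> real" where
  "cc a i = 1 - 1 / a i"

definition MM :: "(nat \<Rightarrow> real) \<Rightarrow> nat \<Rightarrow> nat \<Rightarrow> real" where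
  "MM a s j = (1/2) * (\<Sum>i=2..s. (cc a i) ^ j)"

definition p0 :: "(nat \<Rightarrow> real) \<Rightarrow> nat \<Rightarrow> real" where
  "p0 a s = (\<Prod>i=2..s. a i powr (-1/2))"

fun plist :: "(nat \<Rightarrow> real) \<Rightarrow> nat \<Rightarrow> nat \<Rightarrow> real list" where
  "plist a s 0 = [p0 a s]"
| "plist a s (Suc j) = plist a s j @
     [(1 / real (Suc j)) * (\<Sum>i<Suc j. MM a s (Suc j - i) * (plist a s j ! i))]"

definition pp :: "(nat \<Rightarrow> real) \<Rightarrow> nat \<Rightarrow> nat \<Rightarrow> real" where
  "pp a s j = plist a s j ! j"

definition WW :: "(nat \<Rightarrow> real) \<Rightarrow> nat \<Rightarrow> nat \<Rightarrow> real" where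
  "WW a s i = (\<Sum>j\<le>i. pp a s j)"

end

theory Submission
  imports Defs
begin

text \<open>The recurrence says that P(x) = \<Sum> p_j x^j solves x P' = (\<Sum>_{k\<ge>1} M_k x^k) P.
  Summation by parts rewrites it as (n+1) p_{n+1} = M_1 W_n - D_n, where
  D_n = \<Sum>_{j<n} (M_{n-j} - M_{n+1-j}) W_j has nonnegative weights because M decreases.
  So q_n = (n+1) p_{n+1} / W_n = M_1 - D_n / W_n, and the claim is that q decreases.
  This goes by strong induction: q_{k+1} \<le> q_k for k < n makes the ratios W_{k+1} / W_k
  decrease up to n, and that makes every quotient W_j / W_n occurring in D_n / W_n grow
  when n is replaced by n + 1.\<close>

lemma sum_mult_by_parts:
  fixes f p :: "nat \<Rightarrow> 'a::comm_ring"
  shows "(\<Sum>j<Suc n. f j * p j)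
       = f n * (\<Sum>l\<le>n. p l) - (\<Sum>j<n. (f (Suc j) - f j) * (\<Sum>l\<le>j. p l))"
  by (induction n) (simp_all add: algebra_simps)

lemma cross_le_if_ratio_antitone:
  fixes W :: "nat \<Rightarrow> real"
  assumes pos: "\<And>j. W j > 0"
    and step: "\<And>k. k < n \<Longrightarrow> W (Suc (Suc k)) / W (Suc k) \<le> W (Suc k) / W k"
    and "j \<le> n"
  shows "W j * W (Suc n) \<le> W (Suc j) * W n"
proof -
  have "W (Suc n) / W n \<le> W (Suc j) / W j"
    using \<open>j \<le> n\<close> step
  proof (induction n rule: dec_induct)
    case (step m)
    then show ?case by (meson dual_order.trans lessI less_trans)
  qed simp
  then show ?thesis
    using pos[of j] pos[of n] by (simp add: field_simps)
qed

locale exp_coeff_recurrence =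
  fixes M p :: "nat \<Rightarrow> real"
  assumes p_0_pos: "p 0 > 0"
    and M_pos: "\<And>k. M (Suc k) > 0"
    and M_decseq: "decseq M"
    and recurrence: "\<And>j. real (Suc j) * p (Suc j) = (\<Sum>i<Suc j. M (Suc j - i) * p i)"
begin

definition W :: "nat \<Rightarrow> real" where
  "W n = (\<Sum>j\<le>n. p j)"

definition D :: "nat \<Rightarrow> real" where
  "D n = (\<Sum>j<n. (M (n - j) - M (Suc n - j)) * W j)"

definition q :: "nat \<Rightarrow> real" where
  "q n = real (Suc n) * p (Suc n) / W n"

lemma p_pos: "p j > 0"
proof (induction j rule: less_induct)
  case (less j)
  show ?case
  proof (cases j)
    case 0
    then show ?thesis using p_0_pos by simp
  next
    case (Suc m)
    have "(\<Sum>i<Suc m. M (Suc m - i) * p i) > 0"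
      using less Suc M_pos by (intro sum_pos) (auto simp: Suc_diff_le)
    then have "real (Suc m) * p (Suc m) > 0"
      using recurrence[of m] by simp
    then show ?thesis
      using Suc by (simp add: zero_less_mult_iff)
  qed
qed

lemma W_pos: "W n > 0"
  unfolding W_def by (rule sum_pos) (auto intro: p_pos)

lemma W_Suc: "W (Suc n) = W n + p (Suc n)"
  by (simp add: W_def)

lemma M_Suc_le: "M (Suc k) \<le> M k"
  using M_decseq by (simp add: decseq_Suc_iff)

lemma Suc_mult_p_eq: "real (Suc n) * p (Suc n) = M 1 * W n - D n"
  using recurrence[of n] sum_mult_by_parts[of "\<lambda>j. M (Suc n - j)" p n]
  by (simp add: W_def D_def Suc_diff_Suc)

lemma q_eq: "q n = M 1 - D n / W n"
  using Suc_mult_p_eq[of n] W_pos[of n] by (simp add: q_def field_simps)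

lemma W_ratio_le_if_q_le:
  assumes "q (Suc k) \<le> q k"
  shows "W (Suc (Suc k)) / W (Suc k) \<le> W (Suc k) / W k"
proof -
  have "real (Suc (Suc k)) * (p (Suc (Suc k)) / W (Suc k))
      \<le> real (Suc k) * (p (Suc k) / W k)"
    using assms by (simp add: q_def)
  also have "\<dots> \<le> real (Suc (Suc k)) * (p (Suc k) / W k)"
    using p_pos[of "Suc k"] W_pos[of k] by (intro mult_right_mono) auto
  finally have "p (Suc (Suc k)) / W (Suc k) \<le> p (Suc k) / W k"
    by (simp only: mult_le_cancel_left_pos of_nat_0_less_iff zero_less_Suc)
  then show ?thesis
    using W_pos[of k] W_pos[of "Suc k"] by (simp add: W_Suc add_divide_distrib)
qed

lemma D_div_W_le:
  assumes "\<And>k. k < n \<Longrightarrow> W (Suc (Suc k)) / W (Suc k) \<le> W (Suc k) / W k"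
  shows "D n / W n \<le> D (Suc n) / W (Suc n)"
proof -
  have weight_nonneg: "M (n - j) - M (Suc n - j) \<ge> 0" if "j < n" for j
    using M_Suc_le[of "n - j"] that by (simp add: Suc_diff_le)
  have D_Suc: "D (Suc n) = (M (Suc n) - M (Suc (Suc n))) * W 0
      + (\<Sum>j<n. (M (n - j) - M (Suc n - j)) * W (Suc j))"
    unfolding D_def sum.lessThan_Suc_shift by simp
  have "D n * W (Suc n) = (\<Sum>j<n. (M (n - j) - M (Suc n - j)) * (W j * W (Suc n)))"
    unfolding D_def by (simp add: sum_distrib_right mult.assoc)
  also have "\<dots> \<le> (\<Sum>j<n. (M (n - j) - M (Suc n - j)) * (W (Suc j) * W n))"
    using cross_le_if_ratio_antitone[of W n, OF W_pos assms] weight_nonneg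
    by (intro sum_mono mult_left_mono) auto
  also have "\<dots> = (\<Sum>j<n. (M (n - j) - M (Suc n - j)) * W (Suc j)) * W n"
    by (simp add: sum_distrib_right mult.assoc)
  also have "\<dots> \<le> D (Suc n) * W n"
    unfolding D_Suc using M_Suc_le[of "Suc n"] W_pos[of 0] W_pos[of n]
    by (intro mult_right_mono) auto
  finally show ?thesis
    using W_pos[of n] W_pos[of "Suc n"] by (simp add: field_simps)
qed

lemma q_Suc_le: "q (Suc n) \<le> q n"
proof (induction n rule: less_induct)
  case (less n)
  then have "D n / W n \<le> D (Suc n) / W (Suc n)"
    by (intro D_div_W_le W_ratio_le_if_q_le) auto
  then show ?case
    by (simp add: q_eq)
qed

lemma growth_ratio_le_W_ratio:
  "real (Suc (Suc n)) * p (Suc (Suc n)) / (real (Suc n) * p (Suc n)) \<le> W (Suc n) / W n"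
proof -
  have "real (Suc n) * p (Suc n) > 0"
    using p_pos[of "Suc n"] by simp
  then show ?thesis
    using q_Suc_le[of n] W_pos[of n] W_pos[of "Suc n"]
    by (simp add: q_def divide_simps mult.commute mult.left_commute)
qed

end

lemma plist_length: "length (plist a s j) = Suc j"
  by (induction j) auto

lemma plist_nth: "i \<le> j \<Longrightarrow> plist a s j ! i = pp a s i"
  by (induction j) (auto simp: pp_def nth_append plist_length le_Suc_eq)

lemma pp_recurrence:
  "real (Suc j) * pp a s (Suc j) = (\<Sum>i<Suc j. MM a s (Suc j - i) * pp a s i)"
proof -
  have "pp a s (Suc j) = (\<Sum>i<Suc j. MM a s (Suc j - i) * (plist a s j ! i)) / real (Suc j)"
    by (simp add: pp_def nth_append plist_length)
  then show ?thesis
    by (simp add: plist_nth)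
qed

lemma one_le_by_chain:
  fixes a :: "nat \<Rightarrow> real"
  assumes "a 1 = 1" and "\<And>i. 1 \<le> i \<Longrightarrow> i < s \<Longrightarrow> a i \<le> a (Suc i)"
    and "i \<in> {1..s}"
  shows "1 \<le> a i"
proof -
  have "1 \<le> i" "i \<le> s" using assms(3) by auto
  then show ?thesis
  proof (induction i rule: dec_induct)
    case (step m)
    then show ?case using assms(2)[of m] by simp
  qed (use assms(1) in auto)
qed

lemma cc_bounds: "1 \<le> a i \<Longrightarrow> 0 \<le> cc a i \<and> cc a i < 1"
  by (simp add: cc_def)

lemma decseq_MM:
  assumes "\<And>i. i \<in> {2..s} \<Longrightarrow> 1 \<le> a i"
  shows "decseq (MM a s)"
proof (rule decseq_SucI)
  fix k
  have "cc a i ^ Suc k \<le> cc a i ^ k" if "i \<in> {2..s}" for i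
    using cc_bounds[of a i, OF assms[OF that]] by (simp add: mult_left_le_one_le)
  then show "MM a s (Suc k) \<le> MM a s k"
    unfolding MM_def by (intro mult_left_mono sum_mono) auto
qed

lemma MM_pos:
  assumes "\<And>i. i \<in> {2..s} \<Longrightarrow> 1 \<le> a i" and "i0 \<in> {2..s}" and "a i0 > 1"
  shows "MM a s k > 0"
proof -
  have "0 < cc a i0 ^ k"
    using assms(3) by (simp add: cc_def)
  also have "\<dots> \<le> (\<Sum>i=2..s. cc a i ^ k)"
    using assms(2) cc_bounds[of a, OF assms(1)] by (intro member_le_sum) auto
  finally show ?thesis by (simp add: MM_def)
qed

lemma p0_pos: "(\<And>i. i \<in> {2..s} \<Longrightarrow> 0 < a i) \<Longrightarrow> p0 a s > 0"
  unfolding p0_def by (rule prod_pos) (metis less_irrefl powr_gt_zero)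

theorem mainTheorem10:
  fixes a :: "nat \<Rightarrow> real" and s :: nat
  assumes "s \<ge> 2"
    and "a 1 = 1"
    and "\<And>i. 1 \<le> i \<Longrightarrow> i < s \<Longrightarrow> a i \<le> a (Suc i)"
    and "\<exists>i\<in>{2..s}. a i > 1"
  shows "(\<forall>j. pp a s j > 0) \<and>
         (\<forall>i\<ge>1. real (i + 1) * pp a s (i + 1) / (real i * pp a s i)
                    \<le> WW a s i / WW a s (i - 1))"
proof -
  have a_ge_1: "1 \<le> a i" if "i \<in> {2..s}" for i
    using one_le_by_chain[OF assms(2,3)] that by auto
  obtain i0 where i0: "i0 \<in> {2..s}" "a i0 > 1"
    using assms(4) by blast
  interpret exp_coeff_recurrence "MM a s" "pp a s"
  proof unfold_locales
    have "0 < a i" if "i \<in> {2..s}" for i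
      using a_ge_1[OF that] by simp
    then have "p0 a s > 0"
      by (rule p0_pos)
    then show "pp a s 0 > 0"
      by (simp add: pp_def)
    show "MM a s (Suc k) > 0" for k
      using a_ge_1 i0 by (rule MM_pos)
    show "decseq (MM a s)"
      using a_ge_1 by (rule decseq_MM)
  qed (rule pp_recurrence)
  have "WW a s = W"
    by (simp add: fun_eq_iff WW_def W_def)
  moreover have "real (i + 1) * pp a s (i + 1) / (real i * pp a s i) \<le> W i / W (i - 1)"
    if "i \<ge> 1" for i
    using growth_ratio_le_W_ratio[of "i - 1"] that by (simp add: Suc_diff_le)
  ultimately show ?thesis
    using p_pos by simp
qed

end
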